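(* For $d \ge 1$, let $w_d = \mathbb{P}\{\|X - Y\| \le 1\}$ where $X,Y$ are independent and uniformly distributed on the unit ball of $\mathbb{R}^d$. Then, as $d \to \infty$, $w_d - w_{d+1} \ge d^{-(d+o(d))/2}$. *)

theory Defs
  imports "HOL-Probability.Probability" "HOL-Library.Landau_Symbols"
begin

text \<open>Lebesgue measure on R^d, with R^d represented as functions on the index set {..<d}.\<close>
definition lebR :: "nat \<Rightarrow> (nat \<Rightarrow> real) measure" where
  "lebR d = PiM {..<d} (\<lambda>_. lborel)"

definition eucl_norm :: "nat \<Rightarrow> (nat \<Rightarrow> real) \<Rightarrow> real" where
  "eucl_norm d x = sqrt (\<Sum>i<d. (x i)\<^sup>2)"

definition unit_ballR :: "nat \<Rightarrow> (nat \<Rightarrow> real) set" where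
  "unit_ballR d = {x \<in> space (lebR d). eucl_norm d x \<le> 1}"

definition unif_ball :: "nat \<Rightarrow> (nat \<Rightarrow> real) measure" where
  "unif_ball d = uniform_measure (lebR d) (unit_ballR d)"

definition w :: "nat \<Rightarrow> real" where
  "w d = measure (unif_ball d \<Otimes>\<^sub>M unif_ball d)
           {(x, y) \<in> space (unif_ball d \<Otimes>\<^sub>M unif_ball d).
              eucl_norm d (\<lambda>i. x i - y i) \<le> 1}"

end

theory Submission
  imports Defs
begin

text \<open>
  For \<open>x\<close> in the unit ball \<open>B\<close>, the reflection \<open>y \<mapsto> x - y\<close> maps the lens \<open>B \<inter> (x + B)\<close> onto
  itself and swaps the two sides of the hyperplane \<open>2 \<langle>x, y\<rangle> = |x|\<^sup>2\<close>, and the far side is the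
  whole cap of \<open>B\<close> beyond that hyperplane. So the lens has twice the volume of the cap, which by
  rotation invariance is \<open>{y \<in> B. y\<^sub>0 \<ge> |x|/2}\<close>. Integrating over \<open>x\<close> and exchanging the
  integrals, the inner integral is the volume of a ball of radius \<open>min 1 (2 y\<^sub>0)\<close>; slicing \<open>B\<close>
  orthogonally to the first axis then gives
  \<open>w\<^sub>d = \<integral>\<^sub>0\<^sup>1 min(1, 2t)\<^sup>d (1 - t\<^sup>2)\<^bsup>(d-1)/2\<^esup> dt / \<integral>\<^sub>0\<^sup>1 (1 - t\<^sup>2)\<^bsup>(d-1)/2\<^esup> dt\<close>.
  Passing from \<open>d\<close> to \<open>d + 1\<close> multiplies the weight by the decreasing factor \<open>\<surd>(1 - t\<^sup>2)\<close>, which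
  by Chebyshev's inequality can only lower the mean of the increasing function \<open>min(1, 2t)\<^sup>d\<close>,
  and raises that function to the power \<open>d + 1\<close>, which lowers the mean by at least \<open>4\<^sup>-\<^sup>d/32\<close>.
  Hence \<open>w\<^sub>d - w\<^sub>d\<^sub>+\<^sub>1 \<ge> 4\<^sup>-\<^sup>d/32\<close>, far more than \<open>d\<^bsup>-d/2\<^esup>\<close>.
\<close>

section \<open>Linear changes of coordinates\<close>

abbreviation lborel_Pi :: "nat set \<Rightarrow> (nat \<Rightarrow> real) measure" where
  "lborel_Pi I \<equiv> PiM I (\<lambda>_. lborel)"

interpretation lborel_Pi: product_sigma_finite "\<lambda>_::nat. lborel :: real measure"
  by (simp add: product_sigma_finite_def lborel.sigma_finite_measure_axioms)

lemma fun_upd_measurable_lborel_Pi: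
  assumes "i \<in> I" "e \<in> borel_measurable (lborel_Pi I)"
  shows "(\<lambda>y. y(i := e y)) \<in> lborel_Pi I \<rightarrow>\<^sub>M lborel_Pi I"
proof -
  have "(\<lambda>y k. if k = i then e y else y k) \<in> lborel_Pi I \<rightarrow>\<^sub>M lborel_Pi I"
    by (rule measurable_PiM_single') (use assms in \<open>auto simp: space_PiM PiE_iff extensional_def\<close>)
  then show ?thesis
    by (simp add: fun_upd_def[abs_def] eq_commute[where a = i])
qed

lemma nn_integral_lborel_Pi_affine_coord:
  assumes I: "finite I" "i \<in> I" and c: "c \<noteq> 0"
    and f[measurable]: "f \<in> borel_measurable (lborel_Pi I)"
    and h[measurable]: "h \<in> borel_measurable (lborel_Pi I)"
    and h_indep: "\<And>y t. h (y(i := t)) = h y"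
  shows "ennreal \<bar>c\<bar> * (\<integral>\<^sup>+y. f (y(i := h y + c * y i)) \<partial>lborel_Pi I) = (\<integral>\<^sup>+y. f y \<partial>lborel_Pi I)"
proof -
  define K where "K = I - {i}"
  have IK: "I = insert i K" "i \<notin> K" "finite K" using I by (auto simp: K_def)
  have "(\<lambda>y. y(i := h y + c * y i)) \<in> lborel_Pi I \<rightarrow>\<^sub>M lborel_Pi I"
    by (rule fun_upd_measurable_lborel_Pi) (use I in auto)
  then have fT[measurable]: "(\<lambda>y. f (y(i := h y + c * y i))) \<in> borel_measurable (lborel_Pi I)"
    using f by (simp add: measurable_compose)
  have slice: "(\<lambda>t. f (x(i := t))) \<in> borel_measurable borel" if x: "x \<in> space (lborel_Pi K)" for x
    using measurable_compose[OF measurable_component_update[OF x IK(2)] f[unfolded IK(1)]] by simp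
  have "ennreal \<bar>c\<bar> * (\<integral>\<^sup>+y. f (y(i := h y + c * y i)) \<partial>lborel_Pi I) =
        (\<integral>\<^sup>+y. ennreal \<bar>c\<bar> * f (y(i := h y + c * y i)) \<partial>lborel_Pi I)"
    by (simp add: nn_integral_cmult)
  also have "\<dots> = (\<integral>\<^sup>+x. (\<integral>\<^sup>+t. ennreal \<bar>c\<bar> * f (x(i := h x + c * t)) \<partial>lborel) \<partial>lborel_Pi K)"
    unfolding IK(1) by (subst lborel_Pi.product_nn_integral_insert) (use fT in \<open>auto simp: IK h_indep\<close>)
  also have "\<dots> = (\<integral>\<^sup>+x. (\<integral>\<^sup>+t. f (x(i := t)) \<partial>lborel) \<partial>lborel_Pi K)"
  proof (rule nn_integral_cong)
    fix x assume x: "x \<in> space (lborel_Pi K)"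
    have "(\<lambda>t. f (x(i := h x + c * t))) \<in> borel_measurable lborel"
      using measurable_compose[OF _ slice[OF x], of "\<lambda>t. h x + c * t"] by simp
    with nn_integral_real_affine[OF slice[OF x] c, of "h x"]
    show "(\<integral>\<^sup>+t. ennreal \<bar>c\<bar> * f (x(i := h x + c * t)) \<partial>lborel) = (\<integral>\<^sup>+t. f (x(i := t)) \<partial>lborel)"
      by (simp add: nn_integral_cmult)
  qed
  also have "\<dots> = (\<integral>\<^sup>+y. f y \<partial>lborel_Pi I)"
    unfolding IK(1) using f by (subst lborel_Pi.product_nn_integral_insert) (auto simp: IK)
  finally show ?thesis .
qed

definition coordwise_affine ::
    "nat set \<Rightarrow> (nat \<Rightarrow> real) \<Rightarrow> (nat \<Rightarrow> real) \<Rightarrow> (nat \<Rightarrow> real) \<Rightarrow> (nat \<Rightarrow> real)" where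
  "coordwise_affine J a c y = (\<lambda>k. if k \<in> J then a k + c k * y k else y k)"

lemma coordwise_affine_measurable:
  assumes "J \<subseteq> I"
  shows "coordwise_affine J a c \<in> lborel_Pi I \<rightarrow>\<^sub>M lborel_Pi I"
  unfolding coordwise_affine_def[abs_def]
  by (rule measurable_PiM_single') (use assms in \<open>auto simp: space_PiM PiE_iff extensional_def\<close>)

lemma nn_integral_lborel_Pi_coordwise_affine:
  assumes I: "finite I" "J \<subseteq> I" and c: "\<And>k. k \<in> J \<Longrightarrow> c k \<noteq> 0"
    and f[measurable]: "f \<in> borel_measurable (lborel_Pi I)"
  shows "ennreal (\<Prod>k\<in>J. \<bar>c k\<bar>) * (\<integral>\<^sup>+y. f (coordwise_affine J a c y) \<partial>lborel_Pi I)
       = (\<integral>\<^sup>+y. f y \<partial>lborel_Pi I)"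
proof -
  have "finite J" using I finite_subset by blast
  then show ?thesis using I(2) c
  proof (induction J)
    case empty
    then show ?case by (simp add: coordwise_affine_def)
  next
    case (insert j J)
    have fT: "(\<lambda>y. f (coordwise_affine J a c y)) \<in> borel_measurable (lborel_Pi I)"
      using measurable_compose[OF coordwise_affine_measurable f] insert by simp
    have split: "coordwise_affine (insert j J) a c y = coordwise_affine J a c (y(j := a j + c j * y j))" for y
      using insert by (auto simp: coordwise_affine_def fun_eq_iff)
    have "ennreal (\<Prod>k\<in>insert j J. \<bar>c k\<bar>) * (\<integral>\<^sup>+y. f (coordwise_affine (insert j J) a c y) \<partial>lborel_Pi I)
        = ennreal (\<Prod>k\<in>J. \<bar>c k\<bar>) * (ennreal \<bar>c j\<bar> *
            (\<integral>\<^sup>+y. f (coordwise_affine J a c (y(j := a j + c j * y j))) \<partial>lborel_Pi I))"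
      using insert by (simp add: split ennreal_mult' mult_ac prod_nonneg)
    also have "ennreal \<bar>c j\<bar> * (\<integral>\<^sup>+y. f (coordwise_affine J a c (y(j := a j + c j * y j))) \<partial>lborel_Pi I)
        = (\<integral>\<^sup>+y. f (coordwise_affine J a c y) \<partial>lborel_Pi I)"
      using nn_integral_lborel_Pi_affine_coord[OF I(1) _ _ fT, of j "c j" "\<lambda>_. a j"] insert by simp
    finally show ?case using insert by auto
  qed
qed

definition plane_rotation :: "nat \<Rightarrow> nat \<Rightarrow> real \<Rightarrow> real \<Rightarrow> (nat \<Rightarrow> real) \<Rightarrow> (nat \<Rightarrow> real)" where
  "plane_rotation i j \<alpha> \<beta> y = y(i := \<alpha> * y i - \<beta> * y j, j := \<beta> * y i + \<alpha> * y j)"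

lemma plane_rotation_measurable:
  assumes "i \<in> I" "j \<in> I"
  shows "plane_rotation i j \<alpha> \<beta> \<in> lborel_Pi I \<rightarrow>\<^sub>M lborel_Pi I"
proof -
  have "(\<lambda>y k. if k = j then \<beta> * y i + \<alpha> * y j else if k = i then \<alpha> * y i - \<beta> * y j else y k)
          \<in> lborel_Pi I \<rightarrow>\<^sub>M lborel_Pi I"
    by (rule measurable_PiM_single') (use assms in \<open>auto simp: space_PiM PiE_iff extensional_def\<close>)
  moreover have "(\<lambda>y k. if k = j then \<beta> * y i + \<alpha> * y j else if k = i then \<alpha> * y i - \<beta> * y j else y k)
      = plane_rotation i j \<alpha> \<beta>"
    by (auto simp: fun_eq_iff plane_rotation_def)
  ultimately show ?thesis by simp
qed

text \<open>The rotation by \<open>\<theta> \<noteq> \<pi>\<close>, with \<open>\<alpha> = cos \<theta>\<close> and \<open>\<beta> = sin \<theta>\<close>, is the product of the three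
  shears \<open>(1, -t; 0, 1) (1, 0; \<beta>, 1) (1, -t; 0, 1)\<close> with \<open>t = \<beta> / (1 + \<alpha>) = tan (\<theta>/2)\<close>.\<close>
lemma nn_integral_lborel_Pi_plane_rotation:
  assumes I: "finite I" "i \<in> I" "j \<in> I" "i \<noteq> j" and rot: "\<alpha>\<^sup>2 + \<beta>\<^sup>2 = 1"
    and f[measurable]: "f \<in> borel_measurable (lborel_Pi I)"
  shows "(\<integral>\<^sup>+y. f (plane_rotation i j \<alpha> \<beta> y) \<partial>lborel_Pi I) = (\<integral>\<^sup>+y. f y \<partial>lborel_Pi I)"
proof (cases "\<alpha> = -1")
  case True
  then have "\<beta> = 0" using rot by (simp add: power2_eq_square)
  then have "plane_rotation i j \<alpha> \<beta> y = coordwise_affine {i, j} (\<lambda>_. 0) (\<lambda>_. -1) y" for y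
    using True I by (auto simp: plane_rotation_def coordwise_affine_def fun_eq_iff)
  then show ?thesis
    using nn_integral_lborel_Pi_coordwise_affine[OF I(1) _ _ f, of "{i, j}" "\<lambda>_. -1" "\<lambda>_. 0"] I
    by simp
next
  case False
  define t where "t = \<beta> / (1 + \<alpha>)"
  have \<alpha>: "1 + \<alpha> \<noteq> 0" using False by linarith
  have t\<alpha>: "t * (1 + \<alpha>) = \<beta>" using \<alpha> unfolding t_def by simp
  have \<beta>t: "1 - \<beta> * t = \<alpha>"
  proof -
    have "\<beta> * \<beta> = (1 - \<alpha>) * (1 + \<alpha>)" using rot by (simp add: power2_eq_square algebra_simps)
    then show ?thesis using \<alpha> unfolding t_def by (simp add: field_simps)
  qed
  define S1 where "S1 y = y(i := (- t * y j) + y i)" for y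
  define S2 where "S2 y = y(j := \<beta> * y i + y j)" for y
  have shears: "plane_rotation i j \<alpha> \<beta> y = S1 (S2 (S1 y))" for y
  proof -
    have "(y i - t * y j) - t * (\<beta> * (y i - t * y j) + y j)
          = (1 - \<beta> * t) * y i - (t * (1 + (1 - \<beta> * t))) * y j"
      by (simp add: algebra_simps)
    also have "\<dots> = \<alpha> * y i - \<beta> * y j" unfolding \<beta>t t\<alpha> ..
    moreover have "\<beta> * (y i - t * y j) + y j = \<beta> * y i + (1 - \<beta> * t) * y j"
      by (simp add: algebra_simps)
    ultimately show ?thesis
      using I(4) by (auto simp: plane_rotation_def S1_def S2_def fun_eq_iff \<beta>t)
  qed
  have S_measurable: "(\<lambda>y. g (S1 y)) \<in> borel_measurable (lborel_Pi I)"
    "(\<lambda>y. g (S2 y)) \<in> borel_measurable (lborel_Pi I)"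
    if "g \<in> borel_measurable (lborel_Pi I)" for g :: "(nat \<Rightarrow> real) \<Rightarrow> ennreal"
    unfolding S1_def S2_def
    using measurable_compose[OF fun_upd_measurable_lborel_Pi that] I by auto
  have S_preserves: "(\<integral>\<^sup>+y. g (S1 y) \<partial>lborel_Pi I) = (\<integral>\<^sup>+y. g y \<partial>lborel_Pi I)"
    "(\<integral>\<^sup>+y. g (S2 y) \<partial>lborel_Pi I) = (\<integral>\<^sup>+y. g y \<partial>lborel_Pi I)"
    if "g \<in> borel_measurable (lborel_Pi I)" for g :: "(nat \<Rightarrow> real) \<Rightarrow> ennreal"
    using nn_integral_lborel_Pi_affine_coord[OF I(1) I(2) _ that, of 1 "\<lambda>y. - t * y j"]
      nn_integral_lborel_Pi_affine_coord[OF I(1) I(3) _ that, of 1 "\<lambda>y. \<beta> * y i"] I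
    by (auto simp: S1_def S2_def)
  show ?thesis
    unfolding shears
    using S_preserves(1)[OF S_measurable(2)[OF S_measurable(1)[OF f]]]
      S_preserves(2)[OF S_measurable(1)[OF f]] S_preserves(1)[OF f] by simp
qed

lemma emeasure_lborel_Pi_preimage:
  assumes T: "T \<in> lborel_Pi I \<rightarrow>\<^sub>M lborel_Pi I"
    and T_integral: "\<And>f. f \<in> borel_measurable (lborel_Pi I) \<Longrightarrow>
          C * (\<integral>\<^sup>+y. f (T y) \<partial>lborel_Pi I) = (\<integral>\<^sup>+y. f y \<partial>lborel_Pi I)"
    and S: "{y \<in> space (lborel_Pi I). Q y} \<in> sets (lborel_Pi I)"
  shows "C * emeasure (lborel_Pi I) {y \<in> space (lborel_Pi I). Q (T y)}
       = emeasure (lborel_Pi I) {y \<in> space (lborel_Pi I). Q y}"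
proof -
  let ?S = "{y \<in> space (lborel_Pi I). Q y}"
  have space: "T y \<in> space (lborel_Pi I)" if "y \<in> space (lborel_Pi I)" for y
    using T that by (auto simp: measurable_def)
  have "{y \<in> space (lborel_Pi I). Q (T y)} = T -` ?S \<inter> space (lborel_Pi I)"
    using space by auto
  then have preimage: "{y \<in> space (lborel_Pi I). Q (T y)} \<in> sets (lborel_Pi I)"
    using measurable_sets[OF T S] by simp
  have "C * emeasure (lborel_Pi I) {y \<in> space (lborel_Pi I). Q (T y)}
        = C * (\<integral>\<^sup>+y. indicator {y \<in> space (lborel_Pi I). Q (T y)} y \<partial>lborel_Pi I)"
    using preimage by simp
  also have "\<dots> = C * (\<integral>\<^sup>+y. indicator ?S (T y) \<partial>lborel_Pi I)"
    by (intro arg_cong[where f = "(*) C"] nn_integral_cong) (auto simp: indicator_def space)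
  also have "\<dots> = emeasure (lborel_Pi I) ?S"
    using T_integral[of "indicator ?S"] S by simp
  finally show ?thesis .
qed

lemma emeasure_lborel_Pi_coordwise_affine:
  assumes "finite I" "J \<subseteq> I" "\<And>k. k \<in> J \<Longrightarrow> c k \<noteq> 0"
    and "{y \<in> space (lborel_Pi I). Q y} \<in> sets (lborel_Pi I)"
  shows "ennreal (\<Prod>k\<in>J. \<bar>c k\<bar>) * emeasure (lborel_Pi I) {y \<in> space (lborel_Pi I). Q (coordwise_affine J a c y)}
       = emeasure (lborel_Pi I) {y \<in> space (lborel_Pi I). Q y}"
  using assms by (intro emeasure_lborel_Pi_preimage coordwise_affine_measurable
      nn_integral_lborel_Pi_coordwise_affine)

lemma emeasure_lborel_Pi_plane_rotation:
  assumes "finite I" "i \<in> I" "j \<in> I" "i \<noteq> j" "\<alpha>\<^sup>2 + \<beta>\<^sup>2 = 1"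
    and "{y \<in> space (lborel_Pi I). Q y} \<in> sets (lborel_Pi I)"
  shows "emeasure (lborel_Pi I) {y \<in> space (lborel_Pi I). Q (plane_rotation i j \<alpha> \<beta> y)}
       = emeasure (lborel_Pi I) {y \<in> space (lborel_Pi I). Q y}"
  using emeasure_lborel_Pi_preimage[where C = 1, OF plane_rotation_measurable _ assms(6)]
    nn_integral_lborel_Pi_plane_rotation assms by simp

section \<open>Rotation invariance\<close>

definition sqnorm :: "nat set \<Rightarrow> (nat \<Rightarrow> real) \<Rightarrow> real" where
  "sqnorm I y = (\<Sum>k\<in>I. (y k)\<^sup>2)"

definition dot :: "nat set \<Rightarrow> (nat \<Rightarrow> real) \<Rightarrow> (nat \<Rightarrow> real) \<Rightarrow> real" where
  "dot I x y = (\<Sum>k\<in>I. x k * y k)"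

lemma sqnorm_measurable[measurable]: "sqnorm I \<in> borel_measurable (lborel_Pi I)"
  unfolding sqnorm_def[abs_def] by measurable

lemma dot_measurable[measurable]: "dot I x \<in> borel_measurable (lborel_Pi I)"
  unfolding dot_def[abs_def] by measurable

lemma coord_sq_le_sqnorm: "finite I \<Longrightarrow> i \<in> I \<Longrightarrow> (y i)\<^sup>2 \<le> sqnorm I y"
  unfolding sqnorm_def by (intro member_le_sum) auto

lemma sqnorm_diff: "sqnorm I (\<lambda>k. x k - y k) = sqnorm I x - 2 * dot I x y + sqnorm I y"
  unfolding sqnorm_def dot_def
  by (simp add: power2_diff sum.distrib sum_subtractf sum_distrib_left mult.assoc)

lemma sum_remove_two:
  assumes "finite I" "i \<in> I" "j \<in> I" "i \<noteq> j"
  shows "(\<Sum>k\<in>I. g k) = g i + g j + (\<Sum>k\<in>I - {i, j}. g k)"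
proof -
  have "(\<Sum>k\<in>I. g k) = g i + (\<Sum>k\<in>I - {i}. g k)"
    using assms by (simp add: sum.remove)
  also have "(\<Sum>k\<in>I - {i}. g k) = g j + (\<Sum>k\<in>I - {i} - {j}. g k)"
    using assms by (subst sum.remove) auto
  finally show ?thesis by (simp add: Diff_insert2[symmetric] add.assoc)
qed

lemma sqnorm_plane_rotation:
  assumes "finite I" "i \<in> I" "j \<in> I" "i \<noteq> j" "\<alpha>\<^sup>2 + \<beta>\<^sup>2 = 1"
  shows "sqnorm I (plane_rotation i j \<alpha> \<beta> y) = sqnorm I y"
proof -
  have "(\<alpha> * y i - \<beta> * y j)\<^sup>2 + (\<beta> * y i + \<alpha> * y j)\<^sup>2 = (\<alpha>\<^sup>2 + \<beta>\<^sup>2) * ((y i)\<^sup>2 + (y j)\<^sup>2)"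
    by (simp add: power2_eq_square algebra_simps)
  then show ?thesis
    using assms unfolding sqnorm_def sum_remove_two[OF assms(1-4)]
    by (auto simp: plane_rotation_def intro!: sum.cong)
qed

lemma dot_plane_rotation:
  assumes "finite I" "i \<in> I" "j \<in> I" "i \<noteq> j"
  shows "dot I x (plane_rotation i j \<alpha> \<beta> y) = dot I (plane_rotation i j \<alpha> (- \<beta>) x) y"
proof -
  have "x i * (\<alpha> * y i - \<beta> * y j) + x j * (\<beta> * y i + \<alpha> * y j)
        = (\<alpha> * x i - - \<beta> * x j) * y i + (- \<beta> * x i + \<alpha> * x j) * y j"
    by (simp add: algebra_simps)
  then show ?thesis
    using assms unfolding dot_def sum_remove_two[OF assms]
    by (auto simp: plane_rotation_def intro!: sum.cong)
qed

lemma emeasure_sqnorm_dot_plane_rotation: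
  assumes I: "finite I" "i \<in> I" "j \<in> I" "i \<noteq> j" and rot: "\<alpha>\<^sup>2 + \<beta>\<^sup>2 = 1"
    and A[measurable]: "A \<in> sets borel"
  shows "emeasure (lborel_Pi I) {y \<in> space (lborel_Pi I). sqnorm I y \<le> r \<and> dot I x y \<in> A} =
    emeasure (lborel_Pi I) {y \<in> space (lborel_Pi I). sqnorm I y \<le> r \<and> dot I (plane_rotation i j \<alpha> (- \<beta>) x) y \<in> A}"
proof -
  have "emeasure (lborel_Pi I) {y \<in> space (lborel_Pi I). sqnorm I y \<le> r \<and> dot I x y \<in> A}
     = emeasure (lborel_Pi I) {y \<in> space (lborel_Pi I).
          sqnorm I (plane_rotation i j \<alpha> \<beta> y) \<le> r \<and> dot I x (plane_rotation i j \<alpha> \<beta> y) \<in> A}"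
    by (rule emeasure_lborel_Pi_plane_rotation[OF I rot, symmetric]) measurable
  then show ?thesis
    by (simp add: sqnorm_plane_rotation[OF I rot] dot_plane_rotation[OF I])
qed

lemma plane_rotation_onto_axis:
  assumes "x i \<noteq> 0 \<or> x j \<noteq> 0"
  defines "\<rho> \<equiv> sqrt ((x i)\<^sup>2 + (x j)\<^sup>2)"
  shows "(x i / \<rho>)\<^sup>2 + (x j / \<rho>)\<^sup>2 = 1"
    and "plane_rotation i j (x i / \<rho>) (- (x j / \<rho>)) x = x(i := \<rho>, j := 0)"
proof -
  have \<rho>: "\<rho> > 0" "\<rho>\<^sup>2 = (x i)\<^sup>2 + (x j)\<^sup>2"
    using assms by (auto simp: sum_power2_gt_zero_iff)
  have "(x i / \<rho>)\<^sup>2 + (x j / \<rho>)\<^sup>2 = ((x i)\<^sup>2 + (x j)\<^sup>2) / \<rho>\<^sup>2"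
    by (simp add: power_divide add_divide_distrib)
  also have "\<dots> = 1"
    unfolding \<rho>(2)[symmetric] using \<rho>(1) by simp
  finally show "(x i / \<rho>)\<^sup>2 + (x j / \<rho>)\<^sup>2 = 1" .
  have "x i / \<rho> * x i - - (x j / \<rho>) * x j = \<rho>\<^sup>2 / \<rho>"
    unfolding \<rho>(2) by (simp add: power2_eq_square add_divide_distrib)
  also have "\<dots> = \<rho>" using \<rho>(1) by (simp add: power2_eq_square)
  finally show "plane_rotation i j (x i / \<rho>) (- (x j / \<rho>)) x = x(i := \<rho>, j := 0)"
    unfolding plane_rotation_def by (simp add: field_simps)
qed

lemma emeasure_sqnorm_dot_axis:
  assumes I: "finite I" "i0 \<in> I" and A: "A \<in> sets borel" and x: "\<And>k. k \<in> I - {i0} \<Longrightarrow> x k = 0"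
  shows "emeasure (lborel_Pi I) {y \<in> space (lborel_Pi I). sqnorm I y \<le> r \<and> dot I x y \<in> A} =
    emeasure (lborel_Pi I) {y \<in> space (lborel_Pi I). sqnorm I y \<le> r \<and> sqrt (sqnorm I x) * y i0 \<in> A}"
proof -
  have dot: "dot I x y = x i0 * y i0" for y
    unfolding dot_def using I x by (simp add: sum.remove)
  have sqnorm: "sqnorm I x = (x i0)\<^sup>2"
    unfolding sqnorm_def using I x by (simp add: sum.remove)
  show ?thesis
  proof (cases "x i0 \<ge> 0")
    case True
    then show ?thesis by (simp add: dot sqnorm)
  next
    case False
    define flip where "flip = coordwise_affine {i0} (\<lambda>_. 0) (\<lambda>_. -1)"
    have "sqnorm I (flip y) = sqnorm I y" for y
      unfolding sqnorm_def flip_def coordwise_affine_def by (rule sum.cong) auto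
    moreover have "x i0 * flip y i0 = sqrt (sqnorm I x) * y i0" for y
      using False by (simp add: sqnorm flip_def coordwise_affine_def)
    moreover have "emeasure (lborel_Pi I) {y \<in> space (lborel_Pi I). sqnorm I (flip y) \<le> r \<and> x i0 * flip y i0 \<in> A}
       = emeasure (lborel_Pi I) {y \<in> space (lborel_Pi I). sqnorm I y \<le> r \<and> x i0 * y i0 \<in> A}"
      using emeasure_lborel_Pi_coordwise_affine[OF I(1), of "{i0}" "\<lambda>_. -1"
          "\<lambda>y. sqnorm I y \<le> r \<and> x i0 * y i0 \<in> A" "\<lambda>_. 0"] I A
      unfolding flip_def by simp
    ultimately show ?thesis by (simp add: dot)
  qed
qed

text \<open>Induction over the coordinates \<open>J\<close> of \<open>x\<close> other than \<open>i0\<close> that may still be nonzero;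
  each step rotates one of them into the \<open>i0\<close>-th coordinate.\<close>
lemma emeasure_sqnorm_dot_supported:
  assumes I: "finite I" "i0 \<in> I" and A: "A \<in> sets borel"
  shows "finite J \<Longrightarrow> J \<subseteq> I - {i0} \<Longrightarrow> (\<forall>k \<in> I - insert i0 J. x k = 0) \<Longrightarrow>
    emeasure (lborel_Pi I) {y \<in> space (lborel_Pi I). sqnorm I y \<le> r \<and> dot I x y \<in> A} =
    emeasure (lborel_Pi I) {y \<in> space (lborel_Pi I). sqnorm I y \<le> r \<and> sqrt (sqnorm I x) * y i0 \<in> A}"
proof (induction J arbitrary: x rule: finite_induct)
  case empty
  then show ?case using emeasure_sqnorm_dot_axis[OF I A] by simp
next
  case (insert j J)
  have j: "j \<in> I" "i0 \<noteq> j" using insert by auto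
  show ?case
  proof (cases "x i0 = 0 \<and> x j = 0")
    case True
    then have "\<forall>k\<in>I - insert i0 J. x k = 0" using insert.prems by auto
    then show ?thesis using insert.IH insert.prems by blast
  next
    case False
    define \<rho> where "\<rho> = sqrt ((x i0)\<^sup>2 + (x j)\<^sup>2)"
    define x' where "x' = x(i0 := \<rho>, j := 0)"
    from False have "x i0 \<noteq> 0 \<or> x j \<noteq> 0" by simp
    note rot = plane_rotation_onto_axis[OF this, folded \<rho>_def x'_def]
    have "emeasure (lborel_Pi I) {y \<in> space (lborel_Pi I). sqnorm I y \<le> r \<and> dot I x y \<in> A}
       = emeasure (lborel_Pi I) {y \<in> space (lborel_Pi I). sqnorm I y \<le> r \<and> dot I x' y \<in> A}"
      using emeasure_sqnorm_dot_plane_rotation[OF I j(1,2) rot(1) A, of r x] unfolding rot(2) .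
    also have "\<dots> = emeasure (lborel_Pi I) {y \<in> space (lborel_Pi I).
            sqnorm I y \<le> r \<and> sqrt (sqnorm I x') * y i0 \<in> A}"
    proof (rule insert.IH)
      show "J \<subseteq> I - {i0}" "\<forall>k\<in>I - insert i0 J. x' k = 0"
        using insert.prems unfolding x'_def by auto
    qed
    also have "sqnorm I x' = sqnorm I x"
      using sqnorm_plane_rotation[OF I(1,2) j, of "x i0 / \<rho>" "- (x j / \<rho>)" x] rot by simp
    finally show ?thesis .
  qed
qed

lemma emeasure_sqnorm_dot:
  assumes "finite I" "i0 \<in> I" "A \<in> sets borel"
  shows "emeasure (lborel_Pi I) {y \<in> space (lborel_Pi I). sqnorm I y \<le> r \<and> dot I x y \<in> A} =
    emeasure (lborel_Pi I) {y \<in> space (lborel_Pi I). sqnorm I y \<le> r \<and> sqrt (sqnorm I x) * y i0 \<in> A}"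
  by (rule emeasure_sqnorm_dot_supported[OF assms, of "I - {i0}"]) (use assms in auto)

section \<open>Balls and their slices\<close>

definition unit_ball_on :: "nat set \<Rightarrow> (nat \<Rightarrow> real) set" where
  "unit_ball_on I = {y \<in> space (lborel_Pi I). sqnorm I y \<le> 1}"

definition ball_vol :: "nat set \<Rightarrow> ennreal" where
  "ball_vol I = emeasure (lborel_Pi I) (unit_ball_on I)"

lemma unit_ball_on_sets[measurable]: "unit_ball_on I \<in> sets (lborel_Pi I)"
  unfolding unit_ball_on_def by measurable

lemma emeasure_sqnorm_le_sq:
  assumes I: "finite I" and s: "s > 0"
  shows "emeasure (lborel_Pi I) {y \<in> space (lborel_Pi I). sqnorm I y \<le> s\<^sup>2} = ennreal (s ^ card I) * ball_vol I"
proof -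
  have "sqnorm I (coordwise_affine I (\<lambda>_. 0) (\<lambda>_. s) y) = s\<^sup>2 * sqnorm I y" for y
    unfolding sqnorm_def coordwise_affine_def by (simp add: sum_distrib_left power_mult_distrib)
  then have "{y \<in> space (lborel_Pi I). sqnorm I (coordwise_affine I (\<lambda>_. 0) (\<lambda>_. s) y) \<le> s\<^sup>2}
      = unit_ball_on I"
    using s by (simp add: unit_ball_on_def)
  with emeasure_lborel_Pi_coordwise_affine[OF I subset_refl, of "\<lambda>_. s" "\<lambda>y. sqnorm I y \<le> s\<^sup>2" "\<lambda>_. 0"]
  show ?thesis using s by (simp add: ball_vol_def)
qed

lemma coord_hyperplane_null:
  assumes I: "finite I" "i \<in> I"
  shows "{y \<in> space (lborel_Pi I). y i = c} \<in> null_sets (lborel_Pi I)"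
proof -
  let ?B = "PiE I (\<lambda>k. if k = i then {c} else UNIV)"
  have B: "?B \<in> sets (lborel_Pi I)" by (rule sets_PiM_I_finite) (use I in auto)
  have "emeasure (lborel_Pi I) ?B = (\<Prod>k\<in>I. emeasure lborel (if k = i then {c} else UNIV))"
    by (rule lborel_Pi.emeasure_PiM) (use I in auto)
  also have "\<dots> = 0" using I by (intro prod_zero bexI[of _ i]) auto
  finally have "?B \<in> null_sets (lborel_Pi I)" using B by auto
  moreover have "{y \<in> space (lborel_Pi I). y i = c} \<subseteq> ?B" by (auto simp: space_PiM)
  moreover have "{y \<in> space (lborel_Pi I). y i = c} \<in> sets (lborel_Pi I)" using I by measurable
  ultimately show ?thesis by (blast intro: null_sets_subset)
qed

lemma null_sets_subset_coord_hyperplane: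
  assumes "finite I" "i \<in> I" "S \<in> sets (lborel_Pi I)" "\<And>y. y \<in> S \<Longrightarrow> y i = c"
  shows "S \<in> null_sets (lborel_Pi I)"
proof -
  have "S \<subseteq> {y \<in> space (lborel_Pi I). y i = c}"
    using assms(3,4) sets.sets_into_space by blast
  then show ?thesis using null_sets_subset[OF coord_hyperplane_null[OF assms(1,2)] assms(3)] by blast
qed

lemma ball_vol_finite:
  assumes I: "finite I"
  shows "ball_vol I < \<infinity>"
proof -
  let ?B = "PiE I (\<lambda>k. {-1..1::real})"
  have "emeasure (lborel_Pi I) ?B = (\<Prod>k\<in>I. emeasure lborel {-1..1::real})"
    by (rule lborel_Pi.emeasure_PiM) (use I in auto)
  also have "\<dots> < \<infinity>" by (simp add: ennreal_prod_eq_top less_top[symmetric] power_eq_top_ennreal)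
  finally have fin: "emeasure (lborel_Pi I) ?B < \<infinity>" .
  have "unit_ball_on I \<subseteq> ?B"
  proof
    fix y assume y: "y \<in> unit_ball_on I"
    have "(y k)\<^sup>2 \<le> 1" if "k \<in> I" for k
      using coord_sq_le_sqnorm[OF I that, of y] y by (auto simp: unit_ball_on_def)
    then show "y \<in> ?B" using y by (auto simp: unit_ball_on_def space_PiM PiE_iff abs_le_iff abs_square_le_1)
  qed
  then have "ball_vol I \<le> emeasure (lborel_Pi I) ?B" unfolding ball_vol_def
    by (intro emeasure_mono) (use I in \<open>auto intro!: sets_PiM_I_finite\<close>)
  then show ?thesis using fin by simp
qed

lemma ball_vol_pos:
  assumes I: "finite I"
  shows "ball_vol I > 0"
proof -
  define e where "e = 1 / (real (card I) + 1)"
  have e: "e > 0" "e \<le> 1" unfolding e_def by auto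
  let ?B = "PiE I (\<lambda>k. {-e..e})"
  have "emeasure (lborel_Pi I) ?B = (\<Prod>k\<in>I. emeasure lborel {-e..e})"
    by (rule lborel_Pi.emeasure_PiM) (use I in auto)
  also have "\<dots> > 0" using e I by (simp add: ennreal_power)
  finally have pos: "emeasure (lborel_Pi I) ?B > 0" .
  have "?B \<subseteq> unit_ball_on I"
  proof
    fix y assume y: "y \<in> ?B"
    have "(y k)\<^sup>2 \<le> e\<^sup>2" if "k \<in> I" for k
      using y that abs_le_square_iff[of "y k" e] e by (auto simp: PiE_iff abs_le_iff)
    then have "sqnorm I y \<le> real (card I) * e\<^sup>2" unfolding sqnorm_def
      using sum_mono[of I "\<lambda>k. (y k)\<^sup>2" "\<lambda>_. e\<^sup>2"] by simp
    also have "\<dots> \<le> real (card I) * e"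
      using e by (intro mult_left_mono) (auto simp: power2_eq_square mult_le_cancel_left1)
    also have "\<dots> \<le> 1" unfolding e_def by (simp add: field_simps)
    finally show "y \<in> unit_ball_on I" using y by (auto simp: unit_ball_on_def space_PiM)
  qed
  then have "emeasure (lborel_Pi I) ?B \<le> ball_vol I" unfolding ball_vol_def
    by (intro emeasure_mono) (use I in measurable)
  then show ?thesis using pos by simp
qed

text \<open>\<open>slice_factor m t\<close> is the factor by which the unit ball of dimension \<open>m\<close> must be scaled
  to give the slice at height \<open>t\<close> of the unit ball of dimension \<open>m + 1\<close>.\<close>
definition slice_factor :: "nat \<Rightarrow> real \<Rightarrow> real" where
  "slice_factor m t = (if \<bar>t\<bar> \<le> 1 then sqrt (1 - t\<^sup>2) ^ m else 0)"

lemma slice_factor_measurable[measurable]: "slice_factor m \<in> borel_measurable borel"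
  unfolding slice_factor_def[abs_def] by measurable

lemma emeasure_ball_slice:
  assumes K: "finite K" "K \<noteq> {}"
  shows "emeasure (lborel_Pi K) {x \<in> space (lborel_Pi K). sqnorm K x \<le> 1 - t\<^sup>2}
       = ennreal (slice_factor (card K) t) * ball_vol K"
proof (cases "\<bar>t\<bar> < 1")
  case True
  define s where "s = sqrt (1 - t\<^sup>2)"
  have "t\<^sup>2 < 1" using True by (simp add: abs_square_less_1)
  then have s: "s > 0" "s\<^sup>2 = 1 - t\<^sup>2" unfolding s_def by auto
  show ?thesis
    using emeasure_sqnorm_le_sq[OF K(1) s(1)] True unfolding s(2) by (simp add: slice_factor_def s_def)
next
  case False
  then have "slice_factor (card K) t = 0"
    using K by (auto simp: slice_factor_def abs_square_eq_1 card_gt_0_iff)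
  moreover obtain i where i: "i \<in> K" using K by auto
  moreover have "1 - t\<^sup>2 \<le> 0" using False abs_square_less_1[of t] by simp
  then have "x i = 0" if "sqnorm K x \<le> 1 - t\<^sup>2" for x
  proof -
    have "(x i)\<^sup>2 \<le> 0" using that coord_sq_le_sqnorm[OF K(1) i, of x] \<open>1 - t\<^sup>2 \<le> 0\<close> by linarith
    then show ?thesis by simp
  qed
  ultimately show ?thesis
    using null_sets_subset_coord_hyperplane[OF K(1) i, of "{x \<in> space (lborel_Pi K). sqnorm K x \<le> 1 - t\<^sup>2}" 0]
    by (simp add: null_setsD1)
qed

lemma nn_integral_unit_ball_coord:
  assumes I: "finite I" "i \<in> I" "2 \<le> card I" and g[measurable]: "g \<in> borel_measurable borel"
  shows "(\<integral>\<^sup>+y. indicator (unit_ball_on I) y * g (y i) \<partial>lborel_Pi I)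
       = ball_vol (I - {i}) * (\<integral>\<^sup>+t. g t * ennreal (slice_factor (card I - 1) t) \<partial>lborel)"
proof -
  define K where "K = I - {i}"
  have K: "finite K" "i \<notin> K" "I = insert i K" "card K = card I - 1"
    using I by (auto simp: K_def card_Diff_singleton)
  then have "K \<noteq> {}" using I(3) by auto
  have sqnorm: "sqnorm (insert i K) (x(i := t)) = t\<^sup>2 + sqnorm K x" for x t
    unfolding sqnorm_def using K by (auto intro!: sum.cong)
  have "(\<integral>\<^sup>+y. indicator (unit_ball_on I) y * g (y i) \<partial>lborel_Pi I)
     = (\<integral>\<^sup>+t. (\<integral>\<^sup>+x. indicator (unit_ball_on I) (x(i := t)) * g t \<partial>lborel_Pi K) \<partial>lborel)"
    unfolding K(3) by (subst lborel_Pi.product_nn_integral_insert_rev) (use K in auto)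
  also have "\<dots> = (\<integral>\<^sup>+t. g t * emeasure (lborel_Pi K) {x \<in> space (lborel_Pi K). sqnorm K x \<le> 1 - t\<^sup>2} \<partial>lborel)"
  proof (rule nn_integral_cong)
    fix t :: real
    have "(\<integral>\<^sup>+x. indicator (unit_ball_on I) (x(i := t)) * g t \<partial>lborel_Pi K)
        = (\<integral>\<^sup>+x. g t * indicator {x \<in> space (lborel_Pi K). sqnorm K x \<le> 1 - t\<^sup>2} x \<partial>lborel_Pi K)"
      by (rule nn_integral_cong)
        (use K in \<open>auto simp: indicator_def sqnorm unit_ball_on_def space_PiM PiE_iff extensional_def\<close>)
    then show "(\<integral>\<^sup>+x. indicator (unit_ball_on I) (x(i := t)) * g t \<partial>lborel_Pi K)
        = g t * emeasure (lborel_Pi K) {x \<in> space (lborel_Pi K). sqnorm K x \<le> 1 - t\<^sup>2}"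
      by (simp add: nn_integral_cmult_indicator)
  qed
  also have "\<dots> = (\<integral>\<^sup>+t. ball_vol K * (g t * ennreal (slice_factor (card I - 1) t)) \<partial>lborel)"
    by (rule nn_integral_cong) (simp add: emeasure_ball_slice[OF K(1) \<open>K \<noteq> {}\<close>] K(4) mult_ac)
  also have "\<dots> = ball_vol K * (\<integral>\<^sup>+t. g t * ennreal (slice_factor (card I - 1) t) \<partial>lborel)"
    by (rule nn_integral_cmult) measurable
  finally show ?thesis unfolding K_def .
qed

lemma ball_vol_eq_slices:
  assumes "finite I" "i \<in> I" "2 \<le> card I"
  shows "ball_vol I = ball_vol (I - {i}) * (\<integral>\<^sup>+t. ennreal (slice_factor (card I - 1) t) \<partial>lborel)"
  using nn_integral_unit_ball_coord[OF assms, of "\<lambda>_. 1"] by (simp add: ball_vol_def)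

section \<open>The volume of the lens\<close>

definition lens :: "nat set \<Rightarrow> (nat \<Rightarrow> real) \<Rightarrow> (nat \<Rightarrow> real) set" where
  "lens I x = {y \<in> unit_ball_on I. sqnorm I (\<lambda>k. x k - y k) \<le> 1}"

definition cap :: "nat set \<Rightarrow> nat \<Rightarrow> real \<Rightarrow> (nat \<Rightarrow> real) set" where
  "cap I i h = {y \<in> unit_ball_on I. h \<le> y i}"

lemma lens_sets[measurable]: "lens I x \<in> sets (lborel_Pi I)"
  unfolding lens_def unit_ball_on_def sqnorm_diff by measurable

lemma cap_sets[measurable]: "i \<in> I \<Longrightarrow> cap I i h \<in> sets (lborel_Pi I)"
  unfolding cap_def by measurable

lemma emeasure_point_reflection:
  assumes I: "finite I" and R[measurable]: "Measurable.pred borel R"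
  shows "emeasure (lborel_Pi I) {y \<in> space (lborel_Pi I). sqnorm I (\<lambda>k. x k - y k) \<le> 1 \<and> R (dot I x y)}
       = emeasure (lborel_Pi I) {y \<in> unit_ball_on I. R (sqnorm I x - dot I x y)}"
proof -
  define refl where "refl = coordwise_affine I x (\<lambda>_. -1)"
  have sqnorm_refl: "sqnorm I (\<lambda>k. x k - refl y k) = sqnorm I y" for y
    unfolding sqnorm_def refl_def coordwise_affine_def by simp
  have dot_refl: "dot I x (refl y) = sqnorm I x - dot I x y" for y
    unfolding dot_def sqnorm_def refl_def coordwise_affine_def
    by (simp add: right_diff_distrib sum_subtractf power2_eq_square)
  have "{y \<in> space (lborel_Pi I). sqnorm I (\<lambda>k. x k - y k) \<le> 1 \<and> R (dot I x y)} \<in> sets (lborel_Pi I)"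
    unfolding sqnorm_diff by measurable
  from emeasure_lborel_Pi_coordwise_affine[OF I subset_refl _ this, of "\<lambda>_. -1" x]
  show ?thesis
    unfolding refl_def[symmetric] by (simp add: sqnorm_refl dot_refl unit_ball_on_def)
qed

lemma emeasure_lens_bounds:
  fixes x :: "nat \<Rightarrow> real"
  assumes I: "finite I"
  defines "H \<equiv> {y \<in> unit_ball_on I. sqnorm I x \<le> 2 * dot I x y}"
    and "H' \<equiv> {y \<in> unit_ball_on I. sqnorm I x < 2 * dot I x y}"
  shows "emeasure (lborel_Pi I) H + emeasure (lborel_Pi I) H' \<le> emeasure (lborel_Pi I) (lens I x)"
    and "emeasure (lborel_Pi I) (lens I x) \<le> 2 * emeasure (lborel_Pi I) H"
proof -
  have [measurable]: "H \<in> sets (lborel_Pi I)" "H' \<in> sets (lborel_Pi I)"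
    unfolding H_def H'_def unit_ball_on_def by measurable
  define S where "S = {y \<in> space (lborel_Pi I). sqnorm I (\<lambda>k. x k - y k) \<le> 1 \<and> 2 * dot I x y < sqnorm I x}"
  define S' where "S' = {y \<in> space (lborel_Pi I). sqnorm I (\<lambda>k. x k - y k) \<le> 1 \<and> 2 * dot I x y \<le> sqnorm I x}"
  have [measurable]: "S \<in> sets (lborel_Pi I)" "S' \<in> sets (lborel_Pi I)"
    unfolding S_def S'_def sqnorm_diff by measurable
  have S: "emeasure (lborel_Pi I) S = emeasure (lborel_Pi I) H'"
    using emeasure_point_reflection[OF I, of "\<lambda>s. 2 * s < sqnorm I x"] unfolding S_def H'_def
    by (simp add: algebra_simps)
  have S': "emeasure (lborel_Pi I) S' = emeasure (lborel_Pi I) H"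
    using emeasure_point_reflection[OF I, of "\<lambda>s. 2 * s \<le> sqnorm I x"] unfolding S'_def H_def
    by (simp add: algebra_simps)
  have cover: "H \<union> S \<subseteq> lens I x" "H \<inter> S = {}" "lens I x \<subseteq> H \<union> S'"
    unfolding H_def S_def S'_def lens_def unit_ball_on_def sqnorm_diff by auto
  have "emeasure (lborel_Pi I) H + emeasure (lborel_Pi I) S = emeasure (lborel_Pi I) (H \<union> S)"
    using cover(2) by (intro plus_emeasure) auto
  also have "\<dots> \<le> emeasure (lborel_Pi I) (lens I x)"
    using cover(1) by (intro emeasure_mono) auto
  finally show "emeasure (lborel_Pi I) H + emeasure (lborel_Pi I) H' \<le> emeasure (lborel_Pi I) (lens I x)"
    unfolding S .
  have "emeasure (lborel_Pi I) (lens I x) \<le> emeasure (lborel_Pi I) (H \<union> S')"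
    using cover(3) by (intro emeasure_mono) auto
  also have "\<dots> \<le> emeasure (lborel_Pi I) H + emeasure (lborel_Pi I) S'"
    by (intro emeasure_subadditive) auto
  finally show "emeasure (lborel_Pi I) (lens I x) \<le> 2 * emeasure (lborel_Pi I) H"
    unfolding S' mult_2 .
qed

lemma emeasure_lens:
  assumes I: "finite I" "i \<in> I" and x: "0 < sqnorm I x"
  shows "emeasure (lborel_Pi I) (lens I x) = 2 * emeasure (lborel_Pi I) (cap I i (sqrt (sqnorm I x) / 2))"
proof -
  define r where "r = sqrt (sqnorm I x)"
  have r: "0 < r" "sqnorm I x = r\<^sup>2" using x unfolding r_def by auto
  have rotated: "emeasure (lborel_Pi I) {y \<in> unit_ball_on I. R (dot I x y)}
      = emeasure (lborel_Pi I) {y \<in> unit_ball_on I. R (r * y i)}"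
    if [measurable]: "Measurable.pred borel R" for R
    using emeasure_sqnorm_dot[OF I, of "{s. R s}" 1 x] unfolding unit_ball_on_def r_def by simp
  have "emeasure (lborel_Pi I) {y \<in> unit_ball_on I. sqnorm I x \<le> 2 * dot I x y}
      = emeasure (lborel_Pi I) {y \<in> unit_ball_on I. r\<^sup>2 \<le> 2 * (r * y i)}"
    using rotated[of "\<lambda>s. r\<^sup>2 \<le> 2 * s"] by (simp add: r(2))
  also have "{y \<in> unit_ball_on I. r\<^sup>2 \<le> 2 * (r * y i)} = cap I i (r / 2)"
    using r(1) by (auto simp: cap_def power2_eq_square field_simps)
  finally have H: "emeasure (lborel_Pi I) {y \<in> unit_ball_on I. sqnorm I x \<le> 2 * dot I x y}
      = emeasure (lborel_Pi I) (cap I i (r / 2))" .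
  have "emeasure (lborel_Pi I) {y \<in> unit_ball_on I. sqnorm I x < 2 * dot I x y}
      = emeasure (lborel_Pi I) {y \<in> unit_ball_on I. r\<^sup>2 < 2 * (r * y i)}"
    using rotated[of "\<lambda>s. r\<^sup>2 < 2 * s"] by (simp add: r(2))
  also have "\<dots> = emeasure (lborel_Pi I) ({y \<in> unit_ball_on I. r\<^sup>2 < 2 * (r * y i)}
      \<union> {y \<in> unit_ball_on I. y i = r / 2})"
    using I by (intro emeasure_Un_null_set[symmetric] null_sets_subset_coord_hyperplane[where c = "r / 2"]) auto
  also have "{y \<in> unit_ball_on I. r\<^sup>2 < 2 * (r * y i)} \<union> {y \<in> unit_ball_on I. y i = r / 2}
      = cap I i (r / 2)"
    using r(1) by (auto simp: cap_def power2_eq_square field_simps)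
  finally have H': "emeasure (lborel_Pi I) {y \<in> unit_ball_on I. sqnorm I x < 2 * dot I x y}
      = emeasure (lborel_Pi I) (cap I i (r / 2))" .
  show ?thesis
    using emeasure_lens_bounds[OF I(1), of x] unfolding H H' r_def[symmetric]
    by (auto simp: mult_2 intro: antisym)
qed

definition inner_ball_ratio :: "nat \<Rightarrow> real \<Rightarrow> real" where
  "inner_ball_ratio n t = (if t \<le> 0 then 0 else min 1 (2 * t)) ^ n"

lemma inner_ball_ratio_measurable[measurable]: "inner_ball_ratio n \<in> borel_measurable borel"
  unfolding inner_ball_ratio_def[abs_def] by measurable

lemma emeasure_unit_ball_norm_le:
  assumes I: "finite I" "i \<in> I"
  shows "emeasure (lborel_Pi I) {x \<in> unit_ball_on I. sqrt (sqnorm I x) \<le> 2 * t}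
       = ennreal (inner_ball_ratio (card I) t) * ball_vol I"
proof (cases "t \<le> 0")
  case True
  have "x i = 0" if "sqrt (sqnorm I x) \<le> 2 * t" for x
  proof -
    have "sqrt (sqnorm I x) \<le> 0" using that True by linarith
    then have "sqnorm I x \<le> 0" by simp
    then have "(x i)\<^sup>2 \<le> 0" using coord_sq_le_sqnorm[OF I, of x] by linarith
    then show ?thesis by simp
  qed
  then have "{x \<in> unit_ball_on I. sqrt (sqnorm I x) \<le> 2 * t} \<in> null_sets (lborel_Pi I)"
    using I by (intro null_sets_subset_coord_hyperplane[where c = 0]) (auto simp: unit_ball_on_def)
  moreover have "inner_ball_ratio (card I) t = 0"
    using True I by (auto simp: inner_ball_ratio_def card_gt_0_iff)
  ultimately show ?thesis by (simp add: null_setsD1)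
next
  case False
  define s where "s = min 1 (2 * t)"
  have s: "s > 0" using False unfolding s_def by auto
  have "sqnorm I x \<le> 1 \<and> sqrt (sqnorm I x) \<le> 2 * t \<longleftrightarrow> sqnorm I x \<le> s\<^sup>2" for x
  proof -
    have "sqnorm I x \<le> 1 \<and> sqrt (sqnorm I x) \<le> 2 * t \<longleftrightarrow> sqrt (sqnorm I x) \<le> s"
      unfolding s_def by simp
    also have "\<dots> \<longleftrightarrow> sqnorm I x \<le> s\<^sup>2"
      using s by (auto intro: sqrt_le_D real_le_lsqrt)
    finally show ?thesis .
  qed
  then have "{x \<in> unit_ball_on I. sqrt (sqnorm I x) \<le> 2 * t} = {x \<in> space (lborel_Pi I). sqnorm I x \<le> s\<^sup>2}"
    by (auto simp: unit_ball_on_def)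
  then show ?thesis
    using emeasure_sqnorm_le_sq[OF I(1) s] False by (simp add: inner_ball_ratio_def s_def)
qed

lemma emeasure_cap_measurable[measurable]:
  assumes I: "finite I" "i \<in> I"
  shows "(\<lambda>x. emeasure (lborel_Pi I) (cap I i (sqrt (sqnorm I x) / 2))) \<in> borel_measurable (lborel_Pi I)"
proof -
  interpret sigma_finite_measure "lborel_Pi I" by (rule lborel_Pi.sigma_finite[OF I(1)])
  define Q where "Q = {p \<in> space (lborel_Pi I \<Otimes>\<^sub>M lborel_Pi I).
      snd p \<in> unit_ball_on I \<and> sqrt (sqnorm I (fst p)) / 2 \<le> snd p i}"
  have "Q \<in> sets (lborel_Pi I \<Otimes>\<^sub>M lborel_Pi I)" unfolding Q_def using I by measurable
  from measurable_emeasure_Pair[OF this] show ?thesis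
    by (rule measurable_cong[THEN iffD1, rotated])
      (auto simp: Q_def cap_def space_pair_measure unit_ball_on_def)
qed

definition inner_ball_ratio_integral :: "nat \<Rightarrow> ennreal" where
  "inner_ball_ratio_integral n = (\<integral>\<^sup>+t. ennreal (inner_ball_ratio n t) * ennreal (slice_factor (n - 1) t) \<partial>lborel)"

lemma nn_integral_emeasure_cap:
  assumes I: "finite I" "i \<in> I" "2 \<le> card I"
  shows "(\<integral>\<^sup>+x. indicator (unit_ball_on I) x * emeasure (lborel_Pi I) (cap I i (sqrt (sqnorm I x) / 2)) \<partial>lborel_Pi I)
       = ball_vol I * ball_vol (I - {i}) * inner_ball_ratio_integral (card I)"
proof -
  interpret sigma_finite_measure "lborel_Pi I" by (rule lborel_Pi.sigma_finite[OF I(1)])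
  interpret pair_sigma_finite "lborel_Pi I" "lborel_Pi I" ..
  define Q where "Q = {p \<in> space (lborel_Pi I \<Otimes>\<^sub>M lborel_Pi I). fst p \<in> unit_ball_on I \<and>
      snd p \<in> unit_ball_on I \<and> sqrt (sqnorm I (fst p)) \<le> 2 * snd p i}"
  have [measurable]: "Q \<in> sets (lborel_Pi I \<Otimes>\<^sub>M lborel_Pi I)" unfolding Q_def using I by measurable
  have "(\<integral>\<^sup>+x. indicator (unit_ball_on I) x * emeasure (lborel_Pi I) (cap I i (sqrt (sqnorm I x) / 2)) \<partial>lborel_Pi I)
      = (\<integral>\<^sup>+x. \<integral>\<^sup>+y. indicator Q (x, y) \<partial>lborel_Pi I \<partial>lborel_Pi I)"
  proof (rule nn_integral_cong)
    fix x assume "x \<in> space (lborel_Pi I)"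
    then have "(\<integral>\<^sup>+y. indicator Q (x, y) \<partial>lborel_Pi I)
        = (\<integral>\<^sup>+y. indicator (unit_ball_on I) x * indicator (cap I i (sqrt (sqnorm I x) / 2)) y \<partial>lborel_Pi I)"
      by (intro nn_integral_cong) (auto simp: Q_def cap_def indicator_def space_pair_measure)
    then show "indicator (unit_ball_on I) x * emeasure (lborel_Pi I) (cap I i (sqrt (sqnorm I x) / 2))
        = (\<integral>\<^sup>+y. indicator Q (x, y) \<partial>lborel_Pi I)"
      using I by (simp add: nn_integral_cmult)
  qed
  also have "\<dots> = (\<integral>\<^sup>+y. \<integral>\<^sup>+x. indicator Q (x, y) \<partial>lborel_Pi I \<partial>lborel_Pi I)"
    by (rule Fubini') measurable
  also have "\<dots> = (\<integral>\<^sup>+y. ball_vol I * (indicator (unit_ball_on I) y * ennreal (inner_ball_ratio (card I) (y i))) \<partial>lborel_Pi I)"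
  proof (rule nn_integral_cong)
    fix y assume y: "y \<in> space (lborel_Pi I)"
    have "(\<integral>\<^sup>+x. indicator Q (x, y) \<partial>lborel_Pi I)
        = (\<integral>\<^sup>+x. indicator (unit_ball_on I) y * indicator {x \<in> unit_ball_on I. sqrt (sqnorm I x) \<le> 2 * y i} x \<partial>lborel_Pi I)"
      using y by (auto intro!: nn_integral_cong simp: Q_def indicator_def space_pair_measure unit_ball_on_def)
    also have "\<dots> = indicator (unit_ball_on I) y * emeasure (lborel_Pi I) {x \<in> unit_ball_on I. sqrt (sqnorm I x) \<le> 2 * y i}"
      using I by (intro nn_integral_cmult_indicator) measurable
    finally show "(\<integral>\<^sup>+x. indicator Q (x, y) \<partial>lborel_Pi I)
        = ball_vol I * (indicator (unit_ball_on I) y * ennreal (inner_ball_ratio (card I) (y i)))"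
      unfolding emeasure_unit_ball_norm_le[OF I(1,2)] by (simp only: ac_simps)
  qed
  also have "\<dots> = ball_vol I * (\<integral>\<^sup>+y. indicator (unit_ball_on I) y * ennreal (inner_ball_ratio (card I) (y i)) \<partial>lborel_Pi I)"
    by (rule nn_integral_cmult) (use I in measurable)
  also have "\<dots> = ball_vol I * ball_vol (I - {i}) * inner_ball_ratio_integral (card I)"
    using nn_integral_unit_ball_coord[OF I, of "\<lambda>t. ennreal (inner_ball_ratio (card I) t)"]
    by (simp add: inner_ball_ratio_integral_def mult.assoc)
  finally show ?thesis .
qed

lemma nn_integral_emeasure_lens:
  assumes I: "finite I" "i \<in> I" "2 \<le> card I"
  shows "(\<integral>\<^sup>+x. indicator (unit_ball_on I) x * emeasure (lborel_Pi I) (lens I x) \<partial>lborel_Pi I)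
       = 2 * (ball_vol I * ball_vol (I - {i}) * inner_ball_ratio_integral (card I))"
proof -
  have "AE x in lborel_Pi I. x i \<noteq> 0"
    using coord_hyperplane_null[OF I(1,2), of 0] by (rule AE_I') auto
  then have "AE x in lborel_Pi I. indicator (unit_ball_on I) x * emeasure (lborel_Pi I) (lens I x)
      = 2 * (indicator (unit_ball_on I) x * emeasure (lborel_Pi I) (cap I i (sqrt (sqnorm I x) / 2)))"
  proof eventually_elim
    case (elim x)
    then have "0 < (x i)\<^sup>2" by simp
    then have "0 < sqnorm I x"
      using coord_sq_le_sqnorm[OF I(1,2), of x] by linarith
    then show ?case by (simp add: emeasure_lens[OF I(1,2)] mult_ac)
  qed
  then have "(\<integral>\<^sup>+x. indicator (unit_ball_on I) x * emeasure (lborel_Pi I) (lens I x) \<partial>lborel_Pi I)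
      = (\<integral>\<^sup>+x. 2 * (indicator (unit_ball_on I) x * emeasure (lborel_Pi I) (cap I i (sqrt (sqnorm I x) / 2))) \<partial>lborel_Pi I)"
    by (rule nn_integral_cong_AE)
  also have "\<dots> = 2 * (\<integral>\<^sup>+x. indicator (unit_ball_on I) x * emeasure (lborel_Pi I) (cap I i (sqrt (sqnorm I x) / 2)) \<partial>lborel_Pi I)"
    by (rule nn_integral_cmult) (use I in measurable)
  finally show ?thesis by (simp add: nn_integral_emeasure_cap[OF I])
qed

section \<open>The integral formula for \<open>w\<close>\<close>

lemma emeasure_pair_uniform_measure:
  assumes M: "sigma_finite_measure M" and A: "A \<in> sets M" "emeasure M A \<noteq> 0" "emeasure M A \<noteq> \<infinity>"
    and E: "E \<in> sets (M \<Otimes>\<^sub>M M)"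
  shows "emeasure (uniform_measure M A \<Otimes>\<^sub>M uniform_measure M A) E
       = emeasure (M \<Otimes>\<^sub>M M) (E \<inter> A \<times> A) / (emeasure M A)\<^sup>2"
proof -
  interpret U: prob_space "uniform_measure M A" by (rule prob_space_uniform_measure[OF A(2,3)])
  define c where "c = emeasure M A"
  have "(\<lambda>x. indicator A x / c) \<in> borel_measurable M" using A(1) by measurable
  then have "uniform_measure M A \<Otimes>\<^sub>M uniform_measure M A
      = density (M \<Otimes>\<^sub>M M) (\<lambda>(x, y). indicator A x / c * (indicator A y / c))"
    using M U.sigma_finite_measure_axioms unfolding uniform_measure_def c_def
    by (intro pair_measure_density)
  also have "(\<lambda>(x, y). indicator A x / c * (indicator A y / c)) = (\<lambda>p. indicator (A \<times> A) p / c\<^sup>2)"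
    using A(2,3) unfolding c_def[symmetric]
    by (auto simp: fun_eq_iff indicator_def power2_eq_square divide_ennreal_def
        ennreal_inverse_mult' zero_less_iff_neq_zero less_top)
  finally have "emeasure (uniform_measure M A \<Otimes>\<^sub>M uniform_measure M A) E
      = (\<integral>\<^sup>+p. indicator (A \<times> A) p / c\<^sup>2 * indicator E p \<partial>(M \<Otimes>\<^sub>M M))"
    using A(1) E by (simp add: emeasure_density)
  also have "\<dots> = (\<integral>\<^sup>+p. indicator (E \<inter> A \<times> A) p * (1 / c\<^sup>2) \<partial>(M \<Otimes>\<^sub>M M))"
    by (intro nn_integral_cong) (auto simp: indicator_def divide_ennreal_def)
  also have "\<dots> = emeasure (M \<Otimes>\<^sub>M M) (E \<inter> A \<times> A) / c\<^sup>2"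
    using A(1) E by (simp add: nn_integral_multc divide_ennreal_def)
  finally show ?thesis unfolding c_def .
qed

lemma w_eq_lens_integral:
  "w d = enn2real ((\<integral>\<^sup>+x. indicator (unit_ball_on {..<d}) x * emeasure (lborel_Pi {..<d}) (lens {..<d} x)
      \<partial>lborel_Pi {..<d}) / (ball_vol {..<d})\<^sup>2)"
proof -
  define I where "I = {..<d}"
  define M where "M = lborel_Pi I"
  define B where "B = unit_ball_on I"
  define E where "E = {p \<in> space (M \<Otimes>\<^sub>M M). sqnorm I (\<lambda>k. fst p k - snd p k) \<le> 1}"
  interpret sigma_finite_measure M unfolding M_def by (rule lborel_Pi.sigma_finite) (simp add: I_def)
  have [measurable]: "B \<in> sets M" unfolding B_def M_def by measurable
  have [measurable]: "E \<in> sets (M \<Otimes>\<^sub>M M)" unfolding E_def M_def sqnorm_def by measurable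
  have V: "emeasure M B \<noteq> 0" "emeasure M B \<noteq> \<infinity>"
    using ball_vol_pos[of I] ball_vol_finite[of I] unfolding I_def M_def B_def ball_vol_def by auto
  have "unif_ball d = uniform_measure M B"
    unfolding unif_ball_def unit_ballR_def B_def unit_ball_on_def lebR_def M_def I_def eucl_norm_def sqnorm_def
    by simp
  moreover have "{(x, y) \<in> space (unif_ball d \<Otimes>\<^sub>M unif_ball d). eucl_norm d (\<lambda>i. x i - y i) \<le> 1} = E"
    unfolding calculation E_def eucl_norm_def sqnorm_def I_def space_pair_measure by auto
  ultimately have "w d = enn2real (emeasure (M \<Otimes>\<^sub>M M) (E \<inter> B \<times> B) / (emeasure M B)\<^sup>2)"
    unfolding w_def measure_def
    by (simp add: emeasure_pair_uniform_measure[OF sigma_finite_measure_axioms _ V])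
  also have "emeasure (M \<Otimes>\<^sub>M M) (E \<inter> B \<times> B) = (\<integral>\<^sup>+x. emeasure M (Pair x -` (E \<inter> B \<times> B)) \<partial>M)"
    by (rule emeasure_pair_measure_alt) measurable
  also have "\<dots> = (\<integral>\<^sup>+x. indicator B x * emeasure M (lens I x) \<partial>M)"
  proof (rule nn_integral_cong)
    fix x assume "x \<in> space M"
    then have "Pair x -` (E \<inter> B \<times> B) = (if x \<in> B then lens I x else {})"
      unfolding E_def B_def M_def lens_def unit_ball_on_def space_pair_measure by auto
    then show "emeasure M (Pair x -` (E \<inter> B \<times> B)) = indicator B x * emeasure M (lens I x)"
      by simp
  qed
  finally show ?thesis unfolding I_def M_def B_def ball_vol_def .
qed

lemma inner_ball_ratio_integral_eq:
  assumes n: "n \<ge> 1"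
  shows "inner_ball_ratio_integral n = ennreal (integral {0..1} (\<lambda>t. min 1 (2 * t) ^ n * sqrt (1 - t\<^sup>2) ^ (n - 1)))"
proof -
  define f where "f t = min 1 (2 * t) ^ n * sqrt (1 - t\<^sup>2) ^ (n - 1)" for t :: real
  have "inner_ball_ratio_integral n = (\<integral>\<^sup>+t. ennreal (f t) * indicator {0..1} t \<partial>lborel)"
    unfolding inner_ball_ratio_integral_def
  proof (rule nn_integral_cong)
    fix t :: real
    show "ennreal (inner_ball_ratio n t) * ennreal (slice_factor (n - 1) t) = ennreal (f t) * indicator {0..1} t"
    proof (cases "t \<in> {0..1}")
      case True
      then have "inner_ball_ratio n t = min 1 (2 * t) ^ n" "slice_factor (n - 1) t = sqrt (1 - t\<^sup>2) ^ (n - 1)"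
        using n by (auto simp: inner_ball_ratio_def slice_factor_def)
      moreover have "0 \<le> min 1 (2 * t) ^ n" "0 \<le> sqrt (1 - t\<^sup>2) ^ (n - 1)"
        using True by (auto simp: abs_square_le_1)
      ultimately show ?thesis using True by (simp add: f_def ennreal_mult)
    next
      case False
      then have "inner_ball_ratio n t = 0 \<or> slice_factor (n - 1) t = 0"
        using n by (auto simp: inner_ball_ratio_def slice_factor_def)
      then show ?thesis using False by auto
    qed
  qed
  also have "\<dots> = ennreal (integral {0..1} f)"
  proof (rule nn_integral_has_integral_lebesgue')
    show "0 \<le> f t" if "t \<in> {0..1}" for t
      using that unfolding f_def by (auto simp: abs_square_le_1)
    have "continuous_on {0..1} f" unfolding f_def by (intro continuous_intros)
    then show "(f has_integral integral {0..1} f) {0..1}"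
      by (intro integrable_integral integrable_continuous_interval)
  qed
  finally show ?thesis unfolding f_def .
qed

lemma nn_integral_slice_factor:
  "(\<integral>\<^sup>+t. ennreal (slice_factor m t) \<partial>lborel) = ennreal (2 * integral {0..1} (\<lambda>t. sqrt (1 - t\<^sup>2) ^ m))"
proof -
  define h where "h t = sqrt (1 - t\<^sup>2) ^ m" for t :: real
  have h: "continuous_on {-1..1} h" unfolding h_def by (intro continuous_intros)
  have "(\<integral>\<^sup>+t. ennreal (slice_factor m t) \<partial>lborel) = (\<integral>\<^sup>+t. ennreal (h t) * indicator {-1..1} t \<partial>lborel)"
    by (rule nn_integral_cong) (auto simp: slice_factor_def h_def indicator_def abs_le_iff)
  also have "\<dots> = ennreal (integral {-1..1} h)"
  proof (rule nn_integral_has_integral_lebesgue')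
    show "0 \<le> h t" if "t \<in> {-1..1}" for t
      using that unfolding h_def by (auto simp: abs_square_le_1)
    show "(h has_integral integral {-1..1} h) {-1..1}"
      using h by (intro integrable_integral integrable_continuous_interval)
  qed
  also have "integral {-1..1} h = integral {-1..0} h + integral {0..1} h"
    using Henstock_Kurzweil_Integration.integral_combine[where a = "-1" and c = 0 and b = 1 and f = h] integrable_continuous_interval[OF h]
    by simp
  also have "integral {-1..0} h = integral {0..1} h"
  proof -
    have "(h has_integral integral {0..1} h) {0..1}"
      by (intro integrable_integral integrable_continuous_interval continuous_on_subset[OF h]) auto
    then have "((\<lambda>x. h (-x)) has_integral integral {0..1} h) {-1..-0}"
      by (subst has_integral_reflect_real)
    moreover have "(\<lambda>x. h (-x)) = h" unfolding h_def by auto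
    ultimately show ?thesis by (simp add: integral_unique)
  qed
  finally show ?thesis unfolding h_def by simp
qed

lemma w_eq_integral_ratio:
  assumes d: "d \<ge> 2"
  shows "w d = integral {0..1} (\<lambda>t. min 1 (2 * t) ^ d * sqrt (1 - t\<^sup>2) ^ (d - 1))
             / integral {0..1} (\<lambda>t. sqrt (1 - t\<^sup>2) ^ (d - 1))"
proof -
  define I where "I = {..<d}"
  have I: "finite I" "0 \<in> I" "2 \<le> card I" "card I = d" using d unfolding I_def by auto
  define \<gamma> where "\<gamma> = integral {0..1} (\<lambda>t. min 1 (2 * t) ^ d * sqrt (1 - t\<^sup>2) ^ (d - 1))"
  define A where "A = integral {0..1} (\<lambda>t. sqrt (1 - t\<^sup>2) ^ (d - 1))"
  have "0 \<le> \<gamma>" "0 \<le> A" unfolding \<gamma>_def A_def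
    by (auto intro!: integral_nonneg integrable_continuous_interval continuous_intros simp: abs_square_le_1)
  define v where "v = enn2real (ball_vol I)"
  define v' where "v' = enn2real (ball_vol (I - {0}))"
  have v: "ball_vol I = ennreal v" "v > 0" "ball_vol (I - {0}) = ennreal v'" "v' > 0"
    using ball_vol_pos[of I] ball_vol_finite[of I] ball_vol_pos[of "I - {0}"] ball_vol_finite[of "I - {0}"] I(1)
    unfolding v_def v'_def by (auto simp: enn2real_positive_iff)
  have "ennreal v = ennreal v' * ennreal (2 * A)"
    using ball_vol_eq_slices[OF I(1-3)] unfolding v nn_integral_slice_factor I(4) A_def .
  then have v_slices: "v = v' * (2 * A)"
    using \<open>0 \<le> A\<close> v by (simp add: ennreal_mult''[symmetric])
  have "w d = enn2real (2 * (ennreal v * ennreal v' * ennreal \<gamma>) / (ennreal v)\<^sup>2)"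
    using w_eq_lens_integral[of d] nn_integral_emeasure_lens[OF I(1-3)] inner_ball_ratio_integral_eq[of d] d
    unfolding I_def[symmetric] v I(4) \<gamma>_def by simp
  also have "2 * (ennreal v * ennreal v' * ennreal \<gamma>) / (ennreal v)\<^sup>2 = ennreal (2 * (v * v' * \<gamma>) / v\<^sup>2)"
    using v \<open>0 \<le> \<gamma>\<close> by (subst divide_ennreal[symmetric]) (auto simp: ennreal_power ennreal_mult)
  also have "enn2real \<dots> = 2 * (v * v' * \<gamma>) / v\<^sup>2"
    using v \<open>0 \<le> \<gamma>\<close> by simp
  also have "\<dots> = \<gamma> / A"
    using v unfolding v_slices by (simp add: field_simps power2_eq_square)
  finally show ?thesis unfolding \<gamma>_def A_def .
qed

section \<open>Monotonicity in the dimension\<close>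

lemma integral_ge_on_subinterval:
  fixes h :: "real \<Rightarrow> real"
  assumes h: "continuous_on {a..b} h" "\<And>t. t \<in> {a..b} \<Longrightarrow> 0 \<le> h t"
    and sub: "a \<le> c" "c \<le> e" "e \<le> b" and lb: "\<And>t. t \<in> {c..e} \<Longrightarrow> \<kappa> \<le> h t"
  shows "\<kappa> * (e - c) \<le> integral {a..b} h"
proof -
  have "h integrable_on {c..e}"
    using sub by (intro integrable_continuous_interval continuous_on_subset[OF h(1)]) auto
  then have "integral {c..e} (\<lambda>_. \<kappa>) \<le> integral {c..e} h"
    using lb by (intro integral_le) auto
  then have "\<kappa> * (e - c) \<le> integral {c..e} h"
    using sub by (simp add: mult.commute)
  also have "\<dots> \<le> integral {a..b} h"
    using sub h(2) \<open>h integrable_on {c..e}\<close> integrable_continuous_interval[OF h(1)]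
    by (intro integral_subset_le) auto
  finally show ?thesis .
qed

lemma integral_weighted_mean_value:
  fixes a s :: "real \<Rightarrow> real"
  assumes cont: "continuous_on {0..1} a" "continuous_on {0..1} s"
    and s: "\<And>t u. 0 \<le> t \<Longrightarrow> t \<le> u \<Longrightarrow> u \<le> 1 \<Longrightarrow> s u \<le> s t"
    and a: "\<And>t. t \<in> {0..1} \<Longrightarrow> 0 \<le> a t"
    and pos: "0 < integral {0..1} (\<lambda>t. a t * s t)"
  shows "0 < integral {0..1} a"
    and "\<exists>t0. 0 \<le> t0 \<and> t0 \<le> 1 \<and> s t0 = integral {0..1} (\<lambda>t. a t * s t) / integral {0..1} a"
proof -
  define Aa where "Aa = integral {0..1} a"
  define Ab where "Ab = integral {0..1} (\<lambda>t. a t * s t)"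
  have int: "a integrable_on {0..1}" "(\<lambda>t. a t * s t) integrable_on {0..1}"
    "(\<lambda>t. a t * s 0) integrable_on {0..1}" "(\<lambda>t. a t * s 1) integrable_on {0..1}"
    using cont by (auto intro!: integrable_continuous_interval continuous_intros)
  have lower: "a t * s 1 \<le> a t * s t" and upper: "a t * s t \<le> a t * s 0" if "t \<in> {0..1}" for t
    using a[OF that] s[of t 1] s[of 0 t] that by (auto intro: mult_left_mono)
  have "integral {0..1} (\<lambda>t. a t * s 1) \<le> Ab" "Ab \<le> integral {0..1} (\<lambda>t. a t * s 0)"
    unfolding Ab_def using lower upper by (intro integral_le int; simp)+
  then have s1: "s 1 * Aa \<le> Ab" and s0: "Ab \<le> s 0 * Aa"
    unfolding Aa_def by (simp_all add: mult.commute)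
  have "0 \<le> Aa" unfolding Aa_def using int(1) a by (rule integral_nonneg)
  with s0 pos have Aa: "0 < Aa" unfolding Ab_def by (cases "Aa = 0") auto
  then show "0 < integral {0..1} a" unfolding Aa_def .
  have "s 1 \<le> Ab / Aa" "Ab / Aa \<le> s 0"
    using s0 s1 Aa by (auto simp: field_simps)
  then show "\<exists>t0. 0 \<le> t0 \<and> t0 \<le> 1 \<and> s t0 = Ab / Aa"
    using IVT2'[of s 1 "Ab / Aa" 0] cont(2) by auto
qed

lemma integral_mean_antimono_weight:
  fixes g a s :: "real \<Rightarrow> real"
  assumes cont: "continuous_on {0..1} g" "continuous_on {0..1} a" "continuous_on {0..1} s"
    and g: "\<And>t u. 0 \<le> t \<Longrightarrow> t \<le> u \<Longrightarrow> u \<le> 1 \<Longrightarrow> g t \<le> g u"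
    and s: "\<And>t u. 0 \<le> t \<Longrightarrow> t \<le> u \<Longrightarrow> u \<le> 1 \<Longrightarrow> s u \<le> s t"
    and a: "\<And>t. t \<in> {0..1} \<Longrightarrow> 0 \<le> a t"
    and pos: "0 < integral {0..1} (\<lambda>t. a t * s t)"
  shows "integral {0..1} (\<lambda>t. g t * (a t * s t)) / integral {0..1} (\<lambda>t. a t * s t)
       \<le> integral {0..1} (\<lambda>t. g t * a t) / integral {0..1} a"
proof -
  define Aa where "Aa = integral {0..1} a"
  define Ab where "Ab = integral {0..1} (\<lambda>t. a t * s t)"
  have Ab: "0 < Ab" using pos unfolding Ab_def .
  note mean_value = integral_weighted_mean_value[OF cont(2,3) s a pos, folded Aa_def Ab_def]
  have Aa: "0 < Aa" by (rule mean_value(1))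
  define c where "c = Ab / Aa"
  obtain t0 where t0: "0 \<le> t0" "t0 \<le> 1" "s t0 = c"
    using mean_value(2) unfolding c_def by blast
  have int: "a integrable_on {0..1}" "(\<lambda>t. a t * s t) integrable_on {0..1}"
    "(\<lambda>t. g t * a t) integrable_on {0..1}" "(\<lambda>t. g t * (a t * s t)) integrable_on {0..1}"
    using cont by (auto intro!: integrable_continuous_interval continuous_intros)
  define F where "F t = (g t - g t0) * (a t / Aa - a t * s t / Ab)" for t
  have F_nonneg: "0 \<le> F t" if t: "t \<in> {0..1}" for t
  proof -
    have "F t = a t / Ab * ((g t - g t0) * (c - s t))"
      using Aa pos unfolding F_def c_def Ab_def[symmetric] by (simp add: field_simps)
    moreover have "0 \<le> a t / Ab" using a[OF t] pos unfolding Ab_def by simp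
    moreover have "0 \<le> (g t - g t0) * (c - s t)"
      using t t0 g[of t t0] g[of t0 t] s[of t t0] s[of t0 t]
      by (cases "t \<le> t0") (auto intro: mult_nonpos_nonpos)
    ultimately show ?thesis by (simp only: mult_nonneg_nonneg)
  qed
  have "(F has_integral (integral {0..1} (\<lambda>t. g t * a t) / Aa - integral {0..1} (\<lambda>t. g t * (a t * s t)) / Ab
      - g t0 * (Aa / Aa) + g t0 * (Ab / Ab))) {0..1}"
  proof -
    have F: "F t = g t * a t / Aa - g t * (a t * s t) / Ab - g t0 * (a t / Aa) + g t0 * (a t * s t / Ab)" for t
      using Aa Ab unfolding F_def by (simp add: field_simps)
    show ?thesis
      unfolding F Aa_def Ab_def
      by (intro has_integral_add has_integral_diff has_integral_divide
          has_integral_mult_right integrable_integral int)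
  qed
  from has_integral_nonneg[OF this F_nonneg] show ?thesis
    using Aa pos unfolding Aa_def Ab_def by simp
qed

lemma sqrt_one_minus_sq_ge_half: "t \<in> {1/4..3/8} \<Longrightarrow> 1/2 \<le> sqrt (1 - t\<^sup>2)"
proof -
  assume "t \<in> {1/4..3/8}"
  then have "t\<^sup>2 \<le> (3/8)\<^sup>2" by (intro power_mono) auto
  then have "sqrt (1/4) \<le> sqrt (1 - t\<^sup>2)" by (simp add: power2_eq_square)
  then show ?thesis by (simp add: real_sqrt_divide)
qed

lemma integral_power_step_gap:
  "(1/4) ^ d / 32 \<le> integral {0..1} (\<lambda>t. (min 1 (2 * t) ^ d - min 1 (2 * t) ^ Suc d) * sqrt (1 - t\<^sup>2) ^ d)"
proof -
  have "((1/4) ^ d / 4) * (3/8 - 1/4) \<le> integral {0..1} (\<lambda>t. (min 1 (2 * t) ^ d - min 1 (2 * t) ^ Suc d) * sqrt (1 - t\<^sup>2) ^ d)"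
  proof (rule integral_ge_on_subinterval)
    show "continuous_on {0..1} (\<lambda>t. (min 1 (2 * t) ^ d - min 1 (2 * t) ^ Suc d) * sqrt (1 - t\<^sup>2) ^ d)"
      by (intro continuous_intros)
    show "0 \<le> (min 1 (2 * t) ^ d - min 1 (2 * t) ^ Suc d) * sqrt (1 - t\<^sup>2) ^ d" if "t \<in> {0..1}" for t
      using that by (intro mult_nonneg_nonneg) (auto simp: abs_square_le_1 intro!: mult_left_le_one_le)
    show "(1/4) ^ d / 4 \<le> (min 1 (2 * t) ^ d - min 1 (2 * t) ^ Suc d) * sqrt (1 - t\<^sup>2) ^ d"
      if t: "t \<in> {1/4..3/8}" for t
    proof -
      have "(1/2) ^ d \<le> (2 * t) ^ d" using t by (intro power_mono) auto
      moreover have "1/4 \<le> 1 - 2 * t" using t by auto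
      ultimately have "(1/2) ^ d * (1/4) \<le> (2 * t) ^ d * (1 - 2 * t)"
        by (rule mult_mono) (use t in auto)
      also have "\<dots> = min 1 (2 * t) ^ d - min 1 (2 * t) ^ Suc d"
        using t by (simp add: algebra_simps)
      finally have diff: "(1/2) ^ d * (1/4) \<le> min 1 (2 * t) ^ d - min 1 (2 * t) ^ Suc d" .
      have "0 \<le> (1/2::real) ^ d * (1/4)" by simp
      with diff have diff_nonneg: "0 \<le> min 1 (2 * t) ^ d - min 1 (2 * t) ^ Suc d" by linarith
      have "(1/2) ^ d \<le> sqrt (1 - t\<^sup>2) ^ d"
        using sqrt_one_minus_sq_ge_half[OF t] by (intro power_mono) auto
      from mult_mono[OF diff this diff_nonneg]
      have "(1/2) ^ d * (1/4) * (1/2) ^ d \<le> (min 1 (2 * t) ^ d - min 1 (2 * t) ^ Suc d) * sqrt (1 - t\<^sup>2) ^ d"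
        by simp
      then show ?thesis by (simp add: power_mult_distrib[symmetric])
    qed
  qed auto
  then show ?thesis by simp
qed

lemma integral_sqrt_one_minus_sq_power_bounds:
  shows "0 < integral {0..1} (\<lambda>t. sqrt (1 - t\<^sup>2) ^ m)"
    and "integral {0..1} (\<lambda>t. sqrt (1 - t\<^sup>2) ^ m) \<le> 1"
proof -
  have "(1/2) ^ m * (3/8 - 1/4) \<le> integral {0..1} (\<lambda>t. sqrt (1 - t\<^sup>2) ^ m)"
    by (rule integral_ge_on_subinterval)
      (auto simp: abs_square_le_1 intro!: continuous_intros power_mono sqrt_one_minus_sq_ge_half)
  moreover have "0 < (1/2::real) ^ m * (3/8 - 1/4)" by simp
  ultimately show "0 < integral {0..1} (\<lambda>t. sqrt (1 - t\<^sup>2) ^ m)" by linarith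
  have "integral {0..1} (\<lambda>t. sqrt (1 - t\<^sup>2) ^ m) \<le> integral {0..1} (\<lambda>_::real. 1::real)"
    by (rule integral_le)
      (auto simp: abs_square_le_1 power_le_one intro!: integrable_continuous_interval continuous_intros)
  then show "integral {0..1} (\<lambda>t. sqrt (1 - t\<^sup>2) ^ m) \<le> 1" by simp
qed

lemma integral_mean_min_power_antimono:
  "integral {0..1} (\<lambda>t. min 1 (2 * t) ^ n * sqrt (1 - t\<^sup>2) ^ Suc m) / integral {0..1} (\<lambda>t. sqrt (1 - t\<^sup>2) ^ Suc m)
   \<le> integral {0..1} (\<lambda>t. min 1 (2 * t) ^ n * sqrt (1 - t\<^sup>2) ^ m) / integral {0..1} (\<lambda>t. sqrt (1 - t\<^sup>2) ^ m)"
proof -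
  have Suc: "sqrt (1 - t\<^sup>2) ^ Suc m = sqrt (1 - t\<^sup>2) ^ m * sqrt (1 - t\<^sup>2)" for t :: real
    by (simp add: power_Suc2)
  show ?thesis
    unfolding Suc
  proof (rule integral_mean_antimono_weight)
    show "continuous_on {0..1} (\<lambda>t::real. min 1 (2 * t) ^ n)"
      "continuous_on {0..1} (\<lambda>t::real. sqrt (1 - t\<^sup>2) ^ m)" "continuous_on {0..1} (\<lambda>t::real. sqrt (1 - t\<^sup>2))"
      by (intro continuous_intros)+
    show "min 1 (2 * t) ^ n \<le> min 1 (2 * u) ^ n" if "0 \<le> t" "t \<le> u" for t u :: real
      using that by (intro power_mono) auto
    show "sqrt (1 - u\<^sup>2) \<le> sqrt (1 - t\<^sup>2)" if "0 \<le> t" "t \<le> u" for t u :: real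
      using that by (simp add: power_mono)
    show "0 \<le> sqrt (1 - t\<^sup>2) ^ m" if "t \<in> {0..1}" for t :: real
      using that by (simp add: abs_square_le_1)
    show "0 < integral {0..1} (\<lambda>t. sqrt (1 - t\<^sup>2) ^ m * sqrt (1 - t\<^sup>2))"
      using integral_sqrt_one_minus_sq_power_bounds(1)[of "Suc m"] unfolding Suc .
  qed
qed

lemma w_diff_ge:
  assumes d: "d \<ge> 2"
  shows "(1/4) ^ d / 32 \<le> w d - w (Suc d)"
proof -
  define b where "b t = sqrt (1 - t\<^sup>2) ^ d" for t :: real
  define g where "g t = min 1 (2 * t) ^ d" for t :: real
  define g' where "g' t = min 1 (2 * t) ^ Suc d" for t :: real
  define D where "D = integral {0..1} (\<lambda>t. g t * b t) - integral {0..1} (\<lambda>t. g' t * b t)"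
  have "Suc (d - 1) = d" using d by simp
  then have "integral {0..1} (\<lambda>t. g t * b t) / integral {0..1} b \<le> w d"
    using integral_mean_min_power_antimono[of d "d - 1"] w_eq_integral_ratio[OF d]
    unfolding g_def b_def by simp
  moreover have "w (Suc d) = integral {0..1} (\<lambda>t. g' t * b t) / integral {0..1} b"
    using w_eq_integral_ratio[of "Suc d"] d unfolding g'_def b_def by simp
  ultimately have "D / integral {0..1} b \<le> w d - w (Suc d)"
    unfolding D_def by (simp add: diff_divide_distrib)
  have "(\<lambda>t. g t * b t) integrable_on {0..1}" "(\<lambda>t. g' t * b t) integrable_on {0..1}"
    unfolding g_def g'_def b_def by (auto intro!: integrable_continuous_interval continuous_intros)
  then have gap: "(1/4) ^ d / 32 \<le> D"
    using integral_power_step_gap[of d]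
    by (simp add: D_def g_def g'_def b_def left_diff_distrib integral_diff)
  moreover have "0 \<le> (1/4::real) ^ d / 32" by simp
  ultimately have "0 \<le> D" by linarith
  then have "D * integral {0..1} b \<le> D"
    using integral_sqrt_one_minus_sq_power_bounds(2)[of d] unfolding b_def[symmetric]
    by (intro mult_left_le)
  then have "D \<le> D / integral {0..1} b"
    using integral_sqrt_one_minus_sq_power_bounds(1)[of d] unfolding b_def[symmetric]
    by (simp add: le_divide_eq)
  with gap \<open>D / integral {0..1} b \<le> w d - w (Suc d)\<close> show ?thesis by linarith
qed

lemma powr_neg_half_le_quarter_power:
  fixes d :: nat
  assumes d: "256 \<le> d"
  shows "real d powr (- real d / 2) \<le> (1/4) ^ d / 32"
proof -
  have "(16::real) ^ d = 256 powr (real d / 2)"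
    by (simp add: powr_realpow[symmetric] powr_powr flip: powr_numeral)
  also have "\<dots> \<le> real d powr (real d / 2)"
    using d by (intro powr_mono2) auto
  finally have sixteen: "16 ^ d \<le> real d powr (real d / 2)" .
  have "(32::real) \<le> 4 ^ d"
    using power_increasing[of 3 d "4::real"] d by simp
  then have "32 * 4 ^ d \<le> (4::real) ^ d * 4 ^ d" by simp
  also have "\<dots> = 16 ^ d" by (simp flip: power_mult_distrib)
  finally have "32 * 4 ^ d \<le> real d powr (real d / 2)" using sixteen by linarith
  then have "inverse (real d powr (real d / 2)) \<le> inverse (32 * 4 ^ d)"
    by (intro le_imp_inverse_le) auto
  then show ?thesis by (simp add: powr_minus_divide power_one_over field_simps)
qed

theorem mainTheorem4:
  shows "\<exists>g :: nat \<Rightarrow> real. g \<in> o(\<lambda>d. real d) \<and>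
           (\<forall>\<^sub>F d in at_top. w d - w (Suc d) \<ge> real d powr (- (real d + g d) / 2))"
proof (intro exI conjI)
  show "(\<lambda>_. 0) \<in> o(\<lambda>d. real d)" by simp
  show "\<forall>\<^sub>F d in at_top. w d - w (Suc d) \<ge> real d powr (- (real d + 0) / 2)"
    using eventually_ge_at_top[of 256]
  proof eventually_elim
    case (elim d)
    then show ?case
      using powr_neg_half_le_quarter_power[of d] w_diff_ge[of d] by simp
  qed
qed

end
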